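(* If $x$, $y$ and $[x,y]$ are monic commutators in $P_n$, then $\sigma([x,y])=\sigma(x)\cup\sigma(y)$.
   Context: $P_n$ denotes the pure braid group on $n$ strands, generated by elements $p_{a,b}$ for $1\le a<b\le n$ subject to the relations: (A) $p_{a,b}p_{a,c}p_{b,c}=p_{a,c}p_{b,c}p_{a,b}=p_{b,c}p_{a,b}p_{a,c}$ for $1\le a<b<c\le n$; (B) $p_{a,b}p_{c,d}=p_{c,d}p_{a,b}$ and $p_{a,d}p_{b,c}=p_{b,c}p_{a,d}$ for $1\le a<b<c<d\le n$; (C) $p_{a,c}p_{b,c}^{-1}p_{b,d}p_{b,c}=p_{b,c}^{-1}p_{b,d}p_{b,c}p_{a,c}$ for $1\le a<b<c<d\le n$. Let $N=\{1,\dots,n\}$. For $S\subseteq N$, $P_S$ is the subgroup generated by the $p_{a,b}$ with $a,b\in S$. Commutator convention: $[x,y]=x^{-1}y^{-1}xy$. Monic commutators are defined recursively: each $p_{a,b}$ and $p_{a,b}^{-1}$ ($1\le a<b\le n$) is a monic commutator; if $x,y$ are monic commutators and $[x,y]\neq1$, then $[x,y]$ is a monic commutator. The support $\sigma(x)$ of $x\in P_n$ is the intersection of all $S\subseteq N$ such that $x\in P_S$. *)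

theory Defs
  imports Main
begin

text \<open>Pure braid group P_n as a finitely presented group: elements are words in
the letters p_{a,b}^{+-1} (1 <= a < b <= n) modulo the congruence generated by free
cancellation and the relations (A), (B), (C).\<close>

type_synonym letter = "(nat \<times> nat) \<times> bool"
type_synonym word = "letter list"

definition gens :: "nat set \<Rightarrow> letter set" where
  "gens S = {((a,b),s). a \<in> S \<and> b \<in> S \<and> a < b}"

abbreviation N :: "nat \<Rightarrow> nat set" where
  "N n \<equiv> {1..n}"

definition p :: "nat \<Rightarrow> nat \<Rightarrow> word" where
  "p a b = [((a,b),True)]"

definition pinv :: "nat \<Rightarrow> nat \<Rightarrow> word" where
  "pinv a b = [((a,b),False)]"

definition winv :: "word \<Rightarrow> word" where
  "winv w = rev (map (\<lambda>(g,s). (g, \<not> s)) w)"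

definition comm :: "word \<Rightarrow> word \<Rightarrow> word" where
  "comm x y = winv x @ winv y @ x @ y"

inductive eqv :: "nat \<Rightarrow> word \<Rightarrow> word \<Rightarrow> bool" for n where
  refl: "eqv n w w"
| sym: "eqv n u v \<Longrightarrow> eqv n v u"
| trans: "eqv n u v \<Longrightarrow> eqv n v w \<Longrightarrow> eqv n u w"
| ctxt: "eqv n u v \<Longrightarrow> set x \<subseteq> gens (N n) \<Longrightarrow> set y \<subseteq> gens (N n)
          \<Longrightarrow> eqv n (x @ u @ y) (x @ v @ y)"
| cancel: "((a,b),s) \<in> gens (N n) \<Longrightarrow> eqv n [((a,b),s), ((a,b), \<not> s)] []"
| relA1: "1 \<le> a \<Longrightarrow> a < b \<Longrightarrow> b < c \<Longrightarrow> c \<le> n \<Longrightarrow>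
          eqv n (p a b @ p a c @ p b c) (p a c @ p b c @ p a b)"
| relA2: "1 \<le> a \<Longrightarrow> a < b \<Longrightarrow> b < c \<Longrightarrow> c \<le> n \<Longrightarrow>
          eqv n (p a c @ p b c @ p a b) (p b c @ p a b @ p a c)"
| relB1: "1 \<le> a \<Longrightarrow> a < b \<Longrightarrow> b < c \<Longrightarrow> c < d \<Longrightarrow> d \<le> n \<Longrightarrow>
          eqv n (p a b @ p c d) (p c d @ p a b)"
| relB2: "1 \<le> a \<Longrightarrow> a < b \<Longrightarrow> b < c \<Longrightarrow> c < d \<Longrightarrow> d \<le> n \<Longrightarrow>
          eqv n (p a d @ p b c) (p b c @ p a d)"
| relC: "1 \<le> a \<Longrightarrow> a < b \<Longrightarrow> b < c \<Longrightarrow> c < d \<Longrightarrow> d \<le> n \<Longrightarrow>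
          eqv n (p a c @ pinv b c @ p b d @ p b c) (pinv b c @ p b d @ p b c @ p a c)"

text \<open>Monic commutators, as a predicate on words that is invariant under equality in P_n
(so it is really a predicate on group elements).\<close>
inductive monic :: "nat \<Rightarrow> word \<Rightarrow> bool" for n where
  gen: "1 \<le> a \<Longrightarrow> a < b \<Longrightarrow> b \<le> n \<Longrightarrow> monic n [((a,b),s)]"
| com: "monic n x \<Longrightarrow> monic n y \<Longrightarrow> \<not> eqv n (comm x y) [] \<Longrightarrow> monic n (comm x y)"
| eq: "monic n x \<Longrightarrow> eqv n x x' \<Longrightarrow> monic n x'"

definition supp :: "nat \<Rightarrow> word \<Rightarrow> nat set" where
  "supp n x = \<Inter> {S. S \<subseteq> N n \<and> (\<exists>v. set v \<subseteq> gens S \<and> eqv n v x)}"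

end

theory Submission
  imports Defs
begin

text \<open>Deleting the strand i is a homomorphism P_n \<rightarrow> P_n that retracts onto P_{N-{i}}: it
kills every generator p_{a,b} with i \<in> {a,b} and fixes the others.  By induction on monic
commutators, deleting a strand sends a monic commutator either to 1 or to itself.
A monic commutator x with i \<in> \<sigma>(x) is not fixed, since its image lies in P_{N-{i}}; so it is
sent to 1, and then so is [x,y].  If moreover i \<notin> \<sigma>([x,y]), the deletion fixes [x,y], which
therefore equals 1, contradicting that [x,y] is monic.  The inclusion
\<sigma>([x,y]) \<subseteq> \<sigma>(x) \<union> \<sigma>(y) holds for arbitrary x and y.\<close>

abbreviation valid :: "nat \<Rightarrow> word \<Rightarrow> bool" where
  "valid n w \<equiv> set w \<subseteq> gens (N n)"

lemma gens_iff [simp]: "((a,b),s) \<in> gens S \<longleftrightarrow> a \<in> S \<and> b \<in> S \<and> a < b"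
  by (simp add: gens_def)

lemma eqv_valid_iff: "eqv n u v \<Longrightarrow> valid n u \<longleftrightarrow> valid n v"
  by (induction rule: eqv.induct) (auto simp: p_def pinv_def)

declare eqv.trans [trans]

lemma eqv_append_left: "eqv n u v \<Longrightarrow> valid n w \<Longrightarrow> eqv n (w @ u) (w @ v)"
  using eqv.ctxt[of n u v w "[]"] by simp

lemma eqv_append_right: "eqv n u v \<Longrightarrow> valid n w \<Longrightarrow> eqv n (u @ w) (v @ w)"
  using eqv.ctxt[of n u v "[]" w] by simp

lemma eqv_append:
  "eqv n u u' \<Longrightarrow> eqv n v v' \<Longrightarrow> valid n u' \<Longrightarrow> valid n v \<Longrightarrow> eqv n (u @ v) (u' @ v')"
  by (meson eqv_append_left eqv_append_right eqv.trans)

lemma valid_winv: "valid n w \<Longrightarrow> valid n (winv w)"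
  by (auto simp: winv_def)

lemma valid_comm: "valid n x \<Longrightarrow> valid n y \<Longrightarrow> valid n (comm x y)"
  by (auto simp: comm_def winv_def)

lemma winv_Cons: "winv (g # w) = winv w @ [(fst g, \<not> snd g)]"
  by (cases g) (simp add: winv_def)

lemma winv_winv [simp]: "winv (winv w) = w"
  by (induction w) (auto simp: winv_def)

lemma winv_append_self: "valid n w \<Longrightarrow> eqv n (winv w @ w) []"
proof (induction w)
  case Nil
  then show ?case by (simp add: winv_def eqv.refl)
next
  case (Cons g w)
  obtain a b s where g: "g = ((a,b),s)"
    by (metis prod.collapse)
  have valid: "valid n w" "valid n (winv w)"
    using Cons.prems valid_winv by auto
  have "eqv n [((a,b), \<not> s), ((a,b), \<not> \<not> s)] []"
    using Cons.prems g by (intro eqv.cancel) auto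
  then have "eqv n (winv w @ [((a,b), \<not> s), ((a,b), \<not> \<not> s)] @ w) (winv w @ [] @ w)"
    using valid by (intro eqv.ctxt)
  then have "eqv n (winv (g # w) @ g # w) (winv w @ w)"
    by (simp add: winv_Cons g)
  also have "eqv n \<dots> []"
    using Cons.IH valid by blast
  finally show ?case .
qed

lemma append_winv_self: "valid n w \<Longrightarrow> eqv n (w @ winv w) []"
  using winv_append_self[where w="winv w"] valid_winv[where w=w] by simp

lemma eqv_winv:
  assumes "eqv n u v" and "valid n u"
  shows "eqv n (winv u) (winv v)"
proof -
  have "valid n v"
    using assms eqv_valid_iff by blast
  then have "eqv n (winv u) (winv u @ v @ winv v)"
    using append_winv_self[where w=v] assms(2)
    by (metis append_Nil2 eqv.sym eqv_append_left valid_winv)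
  also have "eqv n \<dots> (winv u @ u @ winv v)"
    using \<open>valid n v\<close> assms by (metis append_assoc eqv.sym eqv_append_left eqv_append_right valid_winv)
  also have "eqv n \<dots> (winv v)"
    using winv_append_self[OF assms(2)] \<open>valid n v\<close>
    by (metis append.left_neutral append_assoc eqv_append_right valid_winv)
  finally show ?thesis .
qed

lemma eqv_comm:
  assumes "eqv n u u'" and "eqv n v v'" and "valid n u" and "valid n v"
  shows "eqv n (comm u v) (comm u' v')"
proof -
  have valid': "valid n u'" "valid n v'" "valid n (winv v)" "valid n (winv u')" "valid n (winv v')"
    using assms eqv_valid_iff valid_winv by blast+
  have "eqv n (u @ v) (u' @ v')"
    using assms valid' by (intro eqv_append)
  then have "eqv n (winv v @ u @ v) (winv v' @ u' @ v')"
    using assms valid' by (intro eqv_append eqv_winv) auto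
  then have "eqv n (winv u @ winv v @ u @ v) (winv u' @ winv v' @ u' @ v')"
    using assms valid' by (intro eqv_append eqv_winv) auto
  then show ?thesis
    by (simp add: comm_def)
qed

lemma comm_trivial:
  assumes "valid n u" and "valid n v" and "eqv n u [] \<or> eqv n v []"
  shows "eqv n (comm u v) []"
  using assms(3)
proof
  assume "eqv n u []"
  then have "eqv n (comm u v) (comm [] v)"
    using assms by (intro eqv_comm eqv.refl)
  moreover have "eqv n (comm [] v) []"
    using winv_append_self[OF assms(2)] by (simp add: comm_def winv_def)
  ultimately show ?thesis
    by (rule eqv.trans)
next
  assume "eqv n v []"
  then have "eqv n (comm u v) (comm u [])"
    using assms by (intro eqv_comm eqv.refl)
  moreover have "eqv n (comm u []) []"
    using winv_append_self[OF assms(1)] by (simp add: comm_def winv_def)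
  ultimately show ?thesis
    by (rule eqv.trans)
qed

lemma monic_valid: "monic n x \<Longrightarrow> valid n x"
proof (induction rule: monic.induct)
  case (com x y)
  then show ?case
    using valid_comm by blast
next
  case (eq x x')
  then show ?case
    using eqv_valid_iff by blast
qed simp

definition exponent_sum :: "nat \<times> nat \<Rightarrow> word \<Rightarrow> int" where
  "exponent_sum g w = sum_list (map (\<lambda>(h,s). if h = g then (if s then 1 else -1) else 0) w)"

lemma eqv_exponent_sum: "eqv n u v \<Longrightarrow> exponent_sum g u = exponent_sum g v"
  by (induction rule: eqv.induct) (auto simp: exponent_sum_def p_def pinv_def)

lemma monic_not_trivial: "monic n x \<Longrightarrow> \<not> eqv n x []"
proof (induction rule: monic.induct)
  case (gen a b s)
  show ?case
  proof
    assume "eqv n [((a,b),s)] []"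
    from eqv_exponent_sum[OF this, of "(a,b)"] show False
      by (simp add: exponent_sum_def split: if_splits)
  qed
qed (auto dest: eqv.trans)

definition delete_strand :: "nat \<Rightarrow> word \<Rightarrow> word" where
  "delete_strand i w = filter (\<lambda>((a,b),s). a \<noteq> i \<and> b \<noteq> i) w"

lemma delete_strand_append [simp]:
  "delete_strand i (u @ v) = delete_strand i u @ delete_strand i v"
  by (simp add: delete_strand_def)

lemma delete_strand_winv: "delete_strand i (winv w) = winv (delete_strand i w)"
  by (induction w) (auto simp: delete_strand_def winv_def)

lemma delete_strand_comm:
  "delete_strand i (comm x y) = comm (delete_strand i x) (delete_strand i y)"
  by (simp add: comm_def delete_strand_winv)

lemma delete_strand_gens: "set w \<subseteq> gens S \<Longrightarrow> set (delete_strand i w) \<subseteq> gens (S - {i})"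
  by (auto simp: delete_strand_def)

lemma valid_delete_strand: "valid n w \<Longrightarrow> valid n (delete_strand i w)"
  by (auto simp: delete_strand_def)

lemma delete_strand_id: "set w \<subseteq> gens S \<Longrightarrow> i \<notin> S \<Longrightarrow> delete_strand i w = w"
  unfolding delete_strand_def by (rule filter_True) auto

lemma eqv_delete_strand: "eqv n u v \<Longrightarrow> eqv n (delete_strand i u) (delete_strand i v)"
proof (induction rule: eqv.induct)
  case (ctxt u v x y)
  then show ?case
    using valid_delete_strand by (simp add: eqv.ctxt)
next
  case (relC a b c d)
  show ?case
  proof (cases "i = d")
    case True
    let ?pac = "[((a,c),True)]" and ?bc = "[((b,c),False),((b,c),True)]"
    have "eqv n ?bc []"
      using relC eqv.cancel[of b c False n] by simp
    moreover have "valid n ?pac"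
      using relC by simp
    ultimately have "eqv n (?pac @ ?bc) ?pac" "eqv n (?bc @ ?pac) ?pac"
      using eqv_append_left[of n ?bc "[]" ?pac] eqv_append_right[of n ?bc "[]" ?pac] by simp_all
    with True relC show ?thesis
      by (simp add: delete_strand_def p_def pinv_def) (meson eqv.sym eqv.trans)
  next
    case False
    with relC show ?thesis
      by (auto simp: delete_strand_def p_def pinv_def
          intro: eqv.refl eqv.relC[unfolded p_def pinv_def, simplified])
  qed
qed (auto simp: delete_strand_def p_def
      intro: eqv.refl eqv.sym eqv.trans eqv.cancel eqv.relA1[unfolded p_def, simplified]
        eqv.relA2[unfolded p_def, simplified] eqv.relB1[unfolded p_def, simplified]
        eqv.relB2[unfolded p_def, simplified])

lemma monic_delete_strand_cases:
  "monic n x \<Longrightarrow> eqv n (delete_strand i x) [] \<or> eqv n (delete_strand i x) x"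
proof (induction rule: monic.induct)
  case (gen a b s)
  then show ?case
    by (auto simp: delete_strand_def intro: eqv.refl)
next
  case (com x y)
  have valid: "valid n (delete_strand i x)" "valid n (delete_strand i y)"
    using com.hyps monic_valid valid_delete_strand by blast+
  show ?case
  proof (cases "eqv n (delete_strand i x) [] \<or> eqv n (delete_strand i y) []")
    case True
    then show ?thesis
      using comm_trivial[OF valid] by (simp add: delete_strand_comm)
  next
    case False
    with com.IH have "eqv n (delete_strand i x) x" "eqv n (delete_strand i y) y"
      by auto
    from eqv_comm[OF this valid] show ?thesis
      by (simp add: delete_strand_comm)
  qed
next
  case (eq x x')
  then show ?case
    by (meson eqv.sym eqv.trans eqv_delete_strand)
qed

lemma notin_supp_iff_delete_strand_eqv:
  assumes "valid n x"
  shows "i \<notin> supp n x \<longleftrightarrow> eqv n (delete_strand i x) x"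
proof
  assume "i \<notin> supp n x"
  then obtain S v where "set v \<subseteq> gens S" "eqv n v x" "i \<notin> S"
    unfolding supp_def by blast
  then show "eqv n (delete_strand i x) x"
    by (metis delete_strand_id eqv.sym eqv.trans eqv_delete_strand)
next
  assume "eqv n (delete_strand i x) x"
  moreover have "set (delete_strand i x) \<subseteq> gens (N n - {i})"
    using assms by (rule delete_strand_gens)
  ultimately show "i \<notin> supp n x"
    unfolding supp_def by blast
qed

lemma supp_comm_subset:
  assumes "valid n x" and "valid n y"
  shows "supp n (comm x y) \<subseteq> supp n x \<union> supp n y"
proof
  fix i
  assume "i \<in> supp n (comm x y)"
  show "i \<in> supp n x \<union> supp n y"
  proof (rule ccontr)
    assume "i \<notin> supp n x \<union> supp n y"
    then have "eqv n (delete_strand i x) x" "eqv n (delete_strand i y) y"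
      using assms notin_supp_iff_delete_strand_eqv by blast+
    then have "eqv n (delete_strand i (comm x y)) (comm x y)"
      using assms valid_delete_strand by (simp add: delete_strand_comm eqv_comm)
    then show False
      using \<open>i \<in> supp n (comm x y)\<close> notin_supp_iff_delete_strand_eqv valid_comm assms
      by blast
  qed
qed

lemma monic_delete_strand_trivial:
  assumes "monic n x" and "i \<in> supp n x"
  shows "eqv n (delete_strand i x) []"
  using monic_delete_strand_cases[OF assms(1)] assms
    notin_supp_iff_delete_strand_eqv[OF monic_valid] by blast

lemma supp_comm_superset:
  assumes "monic n x" and "monic n y" and "monic n (comm x y)"
  shows "supp n x \<union> supp n y \<subseteq> supp n (comm x y)"
proof
  fix i
  assume "i \<in> supp n x \<union> supp n y"
  have valid: "valid n x" "valid n y"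
    using assms monic_valid by blast+
  have "eqv n (delete_strand i x) [] \<or> eqv n (delete_strand i y) []"
    using \<open>i \<in> supp n x \<union> supp n y\<close> assms monic_delete_strand_trivial by blast
  then have trivial: "eqv n (delete_strand i (comm x y)) []"
    using comm_trivial valid valid_delete_strand by (simp add: delete_strand_comm)
  show "i \<in> supp n (comm x y)"
  proof (rule ccontr)
    assume "i \<notin> supp n (comm x y)"
    then have "eqv n (delete_strand i (comm x y)) (comm x y)"
      using notin_supp_iff_delete_strand_eqv valid valid_comm by blast
    with trivial have "eqv n (comm x y) []"
      by (meson eqv.sym eqv.trans)
    with monic_not_trivial[OF assms(3)] show False ..
  qed
qed

theorem proposition1p6:
  fixes n :: nat and x y :: word
  assumes "monic n x" and "monic n y" and "monic n (comm x y)"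
  shows "supp n (comm x y) = supp n x \<union> supp n y"
  using supp_comm_subset[OF assms(1,2)[THEN monic_valid]] supp_comm_superset[OF assms]
  by (rule subset_antisym)

end
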